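(* Let $\psi:(0,+\infty)\to\mathbb R$ be a $C^1$ concave function with $\psi>0$ and $\psi'>0$, and assume $\psi(1)D_w$ lies in the image of $\psi$ (so that $\psi^{-1}(\psi(1)D_w)$ is defined; $\psi^{-1}$ is the inverse of the strictly increasing $\psi$). Suppose $f:V\to(0,\infty)$ and $(\Delta^\psi f)(x)<0$ at some vertex $x$. Then $$\Gamma^{\psi}(f)(x)\leq D_{\mu}\left[\psi'(1)\left(\psi^{-1}(\psi(1)D_{w})-1\right)+\psi(1)\right].$$
   Context: Graphs: $G=(V,E)$ is a connected, locally finite graph; each edge $xy$ carries a weight $w_{xy}>0$ (possibly asymmetric), and $\mu:V\to(0,\infty)$ is a vertex measure; $y\sim x$ means $xy\in E$, $\deg(x)=\sum_{y\sim x}w_{xy}<\infty$, $D_\mu=\sup_{x}\deg(x)/\mu(x)$, $D_w=\sup_{x\sim y}\deg(x)/w_{xy}$ (assumed finite). Laplacian: $\Delta f(x)=\frac{1}{\mu(x)}\sum_{y\sim x}w_{xy}(f(y)-f(x))$. For $\psi:(0,\infty)\to\mathbb R$ and $f:V\to(0,\infty)$: $\Delta^\psi f(x)=\Delta\big[\psi\big(\tfrac{f}{f(x)}\big)\big](x)$; for $C^1$ $\psi$, $\overline\psi(s)=\psi'(1)(s-1)-(\psi(s)-\psi(1))$ and $\Gamma^\psi f=\Delta^{\overline\psi}f$. *)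

theory Defs
  imports "HOL-Analysis.Analysis"
begin

definition nbrs :: "('v \<Rightarrow> 'v \<Rightarrow> bool) \<Rightarrow> 'v \<Rightarrow> 'v set" where
  "nbrs E x = {y. E x y}"

definition weighted_graph ::
  "('v \<Rightarrow> 'v \<Rightarrow> bool) \<Rightarrow> ('v \<Rightarrow> 'v \<Rightarrow> real) \<Rightarrow> ('v \<Rightarrow> real) \<Rightarrow> bool" where
  "weighted_graph E w mu \<longleftrightarrow>
     (\<forall>x y. E x y \<longrightarrow> E y x) \<and>
     (\<forall>x. finite (nbrs E x)) \<and>
     (\<forall>x y. (E\<^sup>*\<^sup>*) x y) \<and>
     (\<forall>x y. E x y \<longrightarrow> w x y > 0) \<and>
     (\<forall>x. mu x > 0)"

definition deg :: "('v \<Rightarrow> 'v \<Rightarrow> bool) \<Rightarrow> ('v \<Rightarrow> 'v \<Rightarrow> real) \<Rightarrow> 'v \<Rightarrow> real" where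
  "deg E w x = (\<Sum>y\<in>nbrs E x. w x y)"

definition D_mu :: "('v \<Rightarrow> 'v \<Rightarrow> bool) \<Rightarrow> ('v \<Rightarrow> 'v \<Rightarrow> real) \<Rightarrow> ('v \<Rightarrow> real) \<Rightarrow> real" where
  "D_mu E w mu = (SUP x. deg E w x / mu x)"

definition D_w :: "('v \<Rightarrow> 'v \<Rightarrow> bool) \<Rightarrow> ('v \<Rightarrow> 'v \<Rightarrow> real) \<Rightarrow> real" where
  "D_w E w = (SUP p\<in>{(x,y). E x y}. deg E w (fst p) / w (fst p) (snd p))"

definition D_finite :: "('v \<Rightarrow> 'v \<Rightarrow> bool) \<Rightarrow> ('v \<Rightarrow> 'v \<Rightarrow> real) \<Rightarrow> ('v \<Rightarrow> real) \<Rightarrow> bool" where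
  "D_finite E w mu \<longleftrightarrow>
     bdd_above (range (\<lambda>x. deg E w x / mu x)) \<and>
     bdd_above ((\<lambda>p. deg E w (fst p) / w (fst p) (snd p)) ` {(x,y). E x y})"

definition laplacian ::
  "('v \<Rightarrow> 'v \<Rightarrow> bool) \<Rightarrow> ('v \<Rightarrow> 'v \<Rightarrow> real) \<Rightarrow> ('v \<Rightarrow> real) \<Rightarrow> ('v \<Rightarrow> real) \<Rightarrow> 'v \<Rightarrow> real" where
  "laplacian E w mu f x = (1 / mu x) * (\<Sum>y\<in>nbrs E x. w x y * (f y - f x))"

definition psi_laplacian ::
  "('v \<Rightarrow> 'v \<Rightarrow> bool) \<Rightarrow> ('v \<Rightarrow> 'v \<Rightarrow> real) \<Rightarrow> ('v \<Rightarrow> real) \<Rightarrow> (real \<Rightarrow> real) \<Rightarrow> ('v \<Rightarrow> real) \<Rightarrow> 'v \<Rightarrow> real" where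
  "psi_laplacian E w mu \<psi> f x = laplacian E w mu (\<lambda>y. \<psi> (f y / f x)) x"

definition psi_bar :: "(real \<Rightarrow> real) \<Rightarrow> real \<Rightarrow> real" where
  "psi_bar \<psi> s = deriv \<psi> 1 * (s - 1) - (\<psi> s - \<psi> 1)"

definition psi_Gamma ::
  "('v \<Rightarrow> 'v \<Rightarrow> bool) \<Rightarrow> ('v \<Rightarrow> 'v \<Rightarrow> real) \<Rightarrow> ('v \<Rightarrow> real) \<Rightarrow> (real \<Rightarrow> real) \<Rightarrow> ('v \<Rightarrow> real) \<Rightarrow> 'v \<Rightarrow> real" where
  "psi_Gamma E w mu \<psi> f = psi_laplacian E w mu (psi_bar \<psi>) f"

end

theory Submission
  imports Defs
begin

text \<open>Write \<open>s\<^sub>y = f y / f x\<close>. Since \<open>\<psi> > 0\<close>, the hypothesis \<open>\<Delta>\<^sup>\<psi> f(x) < 0\<close> forces every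
  single term \<open>w\<^sub>x\<^sub>y \<psi>(s\<^sub>y)\<close> below \<open>\<psi>(1) deg(x)\<close>, so \<open>\<psi>(s\<^sub>y) < \<psi>(1) D\<^sub>w\<close> and, \<open>\<psi>\<close> being
  strictly increasing, \<open>s\<^sub>y < T = \<psi>\<^sup>-\<^sup>1(\<psi>(1) D\<^sub>w)\<close>. Dropping the positive term \<open>\<psi>(s\<^sub>y)\<close> from
  \<open>\<psi>\<^bsub>bar\<^esub>(s\<^sub>y)\<close> then bounds it by \<open>\<psi>'(1)(T - 1) + \<psi>(1)\<close>, which is nonnegative by concavity,
  and averaging over the neighbours of \<open>x\<close> gives the factor \<open>deg(x)/\<mu>(x) \<le> D\<^sub>\<mu>\<close>.\<close>

lemma strict_mono_on_of_deriv_pos: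
  fixes \<psi> :: "real \<Rightarrow> real"
  assumes "\<And>s. s > 0 \<Longrightarrow> \<psi> differentiable (at s)" and "\<And>s. s > 0 \<Longrightarrow> deriv \<psi> s > 0"
  shows "strict_mono_on {0<..} \<psi>"
proof (rule strict_mono_onI)
  fix a b :: real
  assume "a \<in> {0<..}" "a < b"
  from \<open>a < b\<close> show "\<psi> a < \<psi> b"
  proof (rule DERIV_pos_imp_increasing)
    fix t assume "a \<le> t"
    with \<open>a \<in> {0<..}\<close> have "t > 0" by simp
    with assms show "\<exists>y. DERIV \<psi> t :> y \<and> y > 0"
      by (metis DERIV_deriv_iff_real_differentiable)
  qed
qed

lemma concave_on_le_tangent:
  fixes \<psi> :: "real \<Rightarrow> real"
  assumes "concave_on S \<psi>" "open S" "connected S" "a \<in> S" "t \<in> S" "\<psi> differentiable (at a)"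
  shows "\<psi> t \<le> \<psi> a + deriv \<psi> a * (t - a)"
proof -
  have "convex_on S (\<lambda>s. - \<psi> s)"
    using assms(1) by (simp add: concave_on_def)
  moreover have "((\<lambda>s. - \<psi> s) has_real_derivative - deriv \<psi> a) (at a within S)"
    using assms(6) by (auto simp: DERIV_deriv_iff_real_differentiable[symmetric]
        intro: derivative_eq_intros has_field_derivative_at_within)
  ultimately have "- deriv \<psi> a * (t - a) \<le> - \<psi> t - - \<psi> a"
    using assms(2-5) by (intro convex_on_imp_above_tangent) (simp_all add: interior_open)
  then show ?thesis by simp
qed

lemma psi_bar_le:
  assumes "\<psi> s \<ge> 0" "deriv \<psi> 1 \<ge> 0" "s \<le> T"
  shows "psi_bar \<psi> s \<le> deriv \<psi> 1 * (T - 1) + \<psi> 1"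
proof -
  have "deriv \<psi> 1 * (s - 1) \<le> deriv \<psi> 1 * (T - 1)"
    using assms(2,3) by (simp add: mult_left_mono)
  then show ?thesis
    using assms(1) by (simp add: psi_bar_def)
qed

lemma psi_bar_one [simp]: "psi_bar \<psi> 1 = 0"
  by (simp add: psi_bar_def)

lemma deg_div_weight_le_D_w:
  assumes "D_finite E w mu" "E x y"
  shows "deg E w x / w x y \<le> D_w E w"
  unfolding D_w_def
  by (rule cSUP_upper2[where x="(x, y)"]) (use assms in \<open>auto simp: D_finite_def\<close>)

lemma deg_div_measure_le_D_mu:
  assumes "D_finite E w mu"
  shows "deg E w x / mu x \<le> D_mu E w mu"
  unfolding D_mu_def
  by (rule cSUP_upper) (use assms in \<open>auto simp: D_finite_def\<close>)

lemma laplacian_eq_weighted_sum: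
  "laplacian E w mu h x = ((\<Sum>y\<in>nbrs E x. w x y * h y) - deg E w x * h x) / mu x"
  unfolding laplacian_def deg_def
  by (simp add: right_diff_distrib sum_subtractf sum_distrib_right diff_divide_distrib)

text \<open>A weak maximum principle: a single weighted term \<open>w\<^sub>x\<^sub>y h(y)\<close> of the sum already stays
  below \<open>deg(x) h(x)\<close>.\<close>
lemma laplacian_neg_imp_neighbour_lt:
  assumes G: "weighted_graph E w mu" and Dfin: "D_finite E w mu"
    and neg: "laplacian E w mu h x < 0"
    and nonneg: "\<And>z. z \<in> nbrs E x \<Longrightarrow> h z \<ge> 0" and "h x \<ge> 0"
    and y: "y \<in> nbrs E x"
  shows "h y < D_w E w * h x"
proof -
  have fin: "finite (nbrs E x)" and wpos: "\<And>z. z \<in> nbrs E x \<Longrightarrow> w x z > 0"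
    and "mu x > 0"
    using G by (auto simp: weighted_graph_def nbrs_def)
  then have "(\<Sum>z\<in>nbrs E x. w x z * h z) < deg E w x * h x"
    using neg by (simp add: laplacian_eq_weighted_sum divide_less_0_iff)
  moreover have "w x y * h y \<le> (\<Sum>z\<in>nbrs E x. w x z * h z)"
    using y fin wpos nonneg by (intro member_le_sum) (auto intro: less_imp_le mult_nonneg_nonneg)
  ultimately have "h y < deg E w x / w x y * h x"
    using wpos[OF y] by (simp add: field_simps)
  also have "\<dots> \<le> D_w E w * h x"
    using deg_div_weight_le_D_w[OF Dfin] y \<open>h x \<ge> 0\<close>
    by (intro mult_right_mono) (auto simp: nbrs_def)
  finally show ?thesis .
qed

lemma laplacian_le_D_mu_bound:
  assumes G: "weighted_graph E w mu" and Dfin: "D_finite E w mu"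
    and "h x = 0" and bound: "\<And>y. y \<in> nbrs E x \<Longrightarrow> h y \<le> K" and "K \<ge> 0"
  shows "laplacian E w mu h x \<le> D_mu E w mu * K"
proof -
  have wpos: "\<And>y. y \<in> nbrs E x \<Longrightarrow> w x y > 0" and "mu x > 0"
    using G by (auto simp: weighted_graph_def nbrs_def)
  have "(\<Sum>y\<in>nbrs E x. w x y * h y) \<le> (\<Sum>y\<in>nbrs E x. w x y * K)"
    using wpos bound by (intro sum_mono mult_left_mono) (auto intro: less_imp_le)
  then have "laplacian E w mu h x \<le> deg E w x / mu x * K"
    using \<open>mu x > 0\<close> \<open>h x = 0\<close>
    by (simp add: laplacian_eq_weighted_sum deg_def sum_distrib_right divide_right_mono)
  also have "\<dots> \<le> D_mu E w mu * K"
    using deg_div_measure_le_D_mu[OF Dfin] \<open>K \<ge> 0\<close> by (rule mult_right_mono)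
  finally show ?thesis .
qed

lemma psi_laplacian_neg_imp_ratio_lt:
  assumes G: "weighted_graph E w mu" and Dfin: "D_finite E w mu"
    and mono: "strict_mono_on {0<..} \<psi>" and pos: "\<forall>s>0. \<psi> s > 0"
    and fpos: "\<forall>y. f y > 0" and neg: "psi_laplacian E w mu \<psi> f x < 0"
    and T: "T > 0" "\<psi> T = \<psi> 1 * D_w E w" and y: "y \<in> nbrs E x"
  shows "f y / f x < T"
proof -
  have fx: "f x \<noteq> 0"
    using fpos by (metis less_irrefl)
  have "\<psi> (f y / f x) < D_w E w * \<psi> (f x / f x)"
    using neg pos fpos
    by (intro laplacian_neg_imp_neighbour_lt[OF G Dfin, where h = "\<lambda>z. \<psi> (f z / f x)"] y)
      (simp_all add: psi_laplacian_def fx less_imp_le)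
  then have "\<psi> (f y / f x) < \<psi> T"
    using T(2) fx by (simp add: mult.commute)
  then show ?thesis
    using strict_mono_on_less[OF mono] T(1) fpos by simp
qed

theorem mainTheorem5:
  fixes E :: "'v \<Rightarrow> 'v \<Rightarrow> bool" and w :: "'v \<Rightarrow> 'v \<Rightarrow> real" and mu :: "'v \<Rightarrow> real"
    and \<psi> :: "real \<Rightarrow> real" and f :: "'v \<Rightarrow> real" and x :: 'v
  assumes G: "weighted_graph E w mu"
    and Dfin: "D_finite E w mu"
    and C1: "\<forall>s>0. \<psi> differentiable (at s)" "continuous_on {0<..} (deriv \<psi>)"
    and conc: "concave_on {0<..} \<psi>"
    and pos: "\<forall>s>0. \<psi> s > 0"
    and dpos: "\<forall>s>0. deriv \<psi> s > 0"
    and img: "\<psi> 1 * D_w E w \<in> \<psi> ` {0<..}"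
    and fpos: "\<forall>y. f y > 0"
    and neg: "psi_laplacian E w mu \<psi> f x < 0"
  shows "psi_Gamma E w mu \<psi> f x \<le>
    D_mu E w mu * (deriv \<psi> 1 * (the_inv_into {0<..} \<psi> (\<psi> 1 * D_w E w) - 1) + \<psi> 1)"
proof -
  have mono: "strict_mono_on {0<..} \<psi>"
    using C1(1) dpos by (intro strict_mono_on_of_deriv_pos) auto
  define T where "T = the_inv_into {0<..} \<psi> (\<psi> 1 * D_w E w)"
  have T: "T > 0" "\<psi> T = \<psi> 1 * D_w E w"
    using img strict_mono_on_imp_inj_on[OF mono]
    by (auto simp: T_def the_inv_into_f_f)
  have "\<psi> T \<le> \<psi> 1 + deriv \<psi> 1 * (T - 1)"
    using concave_on_le_tangent[OF conc] C1(1) T(1) by (simp add: is_interval_connected)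
  then have K_nonneg: "deriv \<psi> 1 * (T - 1) + \<psi> 1 \<ge> 0"
    using pos T(1) by fastforce
  have psi_bar_below_K: "psi_bar \<psi> (f y / f x) \<le> deriv \<psi> 1 * (T - 1) + \<psi> 1"
    if "y \<in> nbrs E x" for y
    using psi_laplacian_neg_imp_ratio_lt[OF G Dfin mono pos fpos neg T that] pos fpos dpos
    by (intro psi_bar_le less_imp_le) auto
  have "psi_Gamma E w mu \<psi> f x = laplacian E w mu (\<lambda>y. psi_bar \<psi> (f y / f x)) x"
    by (simp add: psi_Gamma_def psi_laplacian_def)
  also have "\<dots> \<le> D_mu E w mu * (deriv \<psi> 1 * (T - 1) + \<psi> 1)"
    using fpos psi_bar_below_K
    by (intro laplacian_le_D_mu_bound[OF G Dfin _ _ K_nonneg]) (auto simp: less_imp_neq[symmetric])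
  finally show ?thesis
    unfolding T_def .
qed

end
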